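(* Let $X$ be a real random variable and for $t\in\mathbb{R}$ let $L(t)=\mathbb{E}\left[\exp\left(tX-\frac{t^2}{2}X^2\right)\right]$. (1) If $X$ is heavy on left, then $L(t)\le1$ for all $t\ge0$. (2) If $X$ is heavy on right, then $L(t)\le 1$ for all $t\le0$. (3) If $X$ is symmetric (i.e. $X$ and $-X$ have the same distribution), then $L(t)\le1$ for all $t\in\mathbb{R}$.
   Context: For $a>0$ let $T_a(X)=\min(|X|,a)\,\mathrm{sign}(X)$ denote the truncation of $X$. An integrable random variable $X$ is called heavy on left if $\mathbb{E}[X]=0$ and $\mathbb{E}[T_a(X)]\le0$ for all $a>0$. It is called heavy on right if $-X$ is heavy on left. *)

theory Defs
  imports "HOL-Probability.Probability"
begin

definition trunc :: "real \<Rightarrow> real \<Rightarrow> real" where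
  "trunc a x = min \<bar>x\<bar> a * sgn x"

definition heavy_on_left :: "'a measure \<Rightarrow> ('a \<Rightarrow> real) \<Rightarrow> bool" where
  "heavy_on_left M X \<longleftrightarrow> integrable M X \<and> (\<integral>\<omega>. X \<omega> \<partial>M) = 0 \<and>
     (\<forall>a>0. (\<integral>\<omega>. trunc a (X \<omega>) \<partial>M) \<le> 0)"

definition heavy_on_right :: "'a measure \<Rightarrow> ('a \<Rightarrow> real) \<Rightarrow> bool" where
  "heavy_on_right M X \<longleftrightarrow> heavy_on_left M (\<lambda>\<omega>. - X \<omega>)"

definition symmetric_rv :: "'a measure \<Rightarrow> ('a \<Rightarrow> real) \<Rightarrow> bool" where
  "symmetric_rv M X \<longleftrightarrow> distr M borel X = distr M borel (\<lambda>\<omega>. - X \<omega>)"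

end

theory Submission imports Defs begin

(* Write T_a for the truncation trunc a and consider the odd, bounded profile
     h(y) = \<integral>_0^1 2a T_a(y) da = sgn y * (if |y| \<le> 1 then |y| - |y|^3/3 else 2/3).
   The whole argument rests on the elementary pointwise inequality
     exp (y - y^2/2) \<le> 1 + h(y)        for all real y,
   proved from fourth-order Taylor bounds of exp.  Taking expectations, E[exp(Y - Y^2/2)] \<le> 1
   holds for every random variable Y with E[h(Y)] \<le> 0.  By Fubini,
     E[h(Y)] = \<integral>_0^1 2a E[T_a(Y)] da,
   and for Y = tX with t \<ge> 0 we have E[T_a(tX)] = t E[T_{a/t}(X)] \<le> 0 if X is heavy on left.
   Heavy on right reduces to this case via -X, and for symmetric X we get E[h(tX)] = 0 because
   h is odd. *)

section \<open>Taylor bounds for the exponential\<close>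

(* Upper bound on [0, 1/2]: the Lagrange remainder exp t / 24 * z^4 has exp t \<le> exp (1/2) \<le> 2. *)
lemma exp_le_quartic:
  fixes z :: real assumes "0 \<le> z" "z \<le> 1/2"
  shows "exp z \<le> 1 + z + z^2/2 + z^3/6 + z^4/12"
proof -
  obtain t where t: "\<bar>t\<bar> \<le> \<bar>z\<bar>"
      "exp z = (\<Sum>m<4. z ^ m / fact m) + exp t / fact 4 * z ^ 4"
    using Maclaurin_exp_le[of z 4] by blast
  have "exp t \<le> exp (1/2)" using t(1) assms by simp
  also have "\<dots> \<le> 2" using real_exp_bound_lemma[of "1/2"] by simp
  finally have "exp t / fact 4 * z ^ 4 \<le> 2 / 24 * z^4"
    by (intro mult_right_mono) (auto simp: fact_numeral)
  moreover have "(\<Sum>m<4. z ^ m / fact m) = 1 + z + z^2/2 + z^3/6"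
    by (simp add: numeral_eq_Suc fact_numeral power2_eq_square power3_eq_cube)
  ultimately show ?thesis using t(2) by simp
qed

(* Upper bound on the negative axis: the fifth-order remainder is nonpositive there. *)
lemma exp_neg_le_quartic:
  fixes x :: real assumes "0 \<le> x"
  shows "exp (-x) \<le> 1 - x + x^2/2 - x^3/6 + x^4/24"
proof -
  obtain t where t: "exp (-x) = (\<Sum>m<5. (-x) ^ m / fact m) + exp t / fact 5 * (-x) ^ 5"
    using Maclaurin_exp_le[of "-x" 5] by blast
  have "(\<Sum>m<5. (-x) ^ m / fact m) = 1 - x + x^2/2 - x^3/6 + x^4/24"
    by (simp add: numeral_eq_Suc fact_numeral power2_eq_square power3_eq_cube)
  moreover have "exp t / fact 5 * (-x) ^ 5 \<le> 0"
    using assms by (intro mult_nonneg_nonpos) (auto simp: power_odd_eq)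
  ultimately show ?thesis using t by simp
qed

(* h(y) = \<integral>_0^1 2a T_a(y) da in closed form (see trunc_avg_integral below). *)
definition trunc_avg :: "real \<Rightarrow> real" where
  "trunc_avg y = sgn y * (if \<bar>y\<bar> \<le> 1 then \<bar>y\<bar> - \<bar>y\<bar>^3/3 else 2/3)"

lemma trunc_avg_measurable[measurable]: "trunc_avg \<in> borel_measurable borel"
  unfolding trunc_avg_def by measurable

lemma trunc_avg_odd: "trunc_avg (-y) = - trunc_avg y"
  by (simp add: trunc_avg_def)

lemma trunc_avg_bounded: "\<bar>trunc_avg y\<bar> \<le> 1"
proof -
  have "0 \<le> \<bar>y\<bar> - \<bar>y\<bar>^3/3 \<and> \<bar>y\<bar> - \<bar>y\<bar>^3/3 \<le> 1" if "\<bar>y\<bar> \<le> 1"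
    using power_decreasing[of 1 3 "\<bar>y\<bar>"] that zero_le_power[of "\<bar>y\<bar>" 3] by (simp, linarith)
  thus ?thesis by (auto simp: trunc_avg_def sgn_if abs_mult)
qed

section \<open>The pointwise inequality exp (y - y^2/2) \<le> 1 + h(y)\<close>

(* Case 0 \<le> y \<le> 1: here z = y - y^2/2 lies in [0, 1/2] and the quartic bound suffices. *)
lemma exp_quadratic_le_unit_pos:
  fixes s :: real assumes "0 \<le> s" "s \<le> 1"
  shows "exp (s - s^2/2) \<le> 1 + s - s^3/3"
proof -
  define z where "z = s - s^2/2"
  have "s * s \<le> s" using assms by (simp add: mult_left_le_one_le)
  moreover have "0 \<le> (s - 1) * (s - 1)" by simp
  ultimately have z: "0 \<le> z" "z \<le> 1/2"
    unfolding z_def using assms by (auto simp: power2_eq_square algebra_simps)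
  have gap: "(1 + s - s^3/3) - (1 + z + z^2/2 + z^3/6 + z^4/12)
           = s^4/192 * (8*(1-s^2) + 8 * s*(1-s)^2 + s^2*(4-s^2))"
    unfolding z_def by (simp add: field_simps power2_eq_square power3_eq_cube power4_eq_xxxx)
  have "0 \<le> s^4/192 * (8*(1-s^2) + 8 * s*(1-s)^2 + s^2*(4-s^2))"
    using assms
    by (intro mult_nonneg_nonneg add_nonneg_nonneg)
       (auto simp: power2_eq_square mult_le_one intro: order_trans[of _ 1])
  with gap exp_le_quartic[OF z] show ?thesis unfolding z_def by linarith
qed

lemma exp_quadratic_le_unit_neg:
  fixes s :: real assumes "0 \<le> s" "s \<le> 1"
  shows "exp (-s - s^2/2) \<le> 1 - s + s^3/3"
proof -
  define x where "x = s + s^2/2"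
  have gap: "(1 - s + s^3/3) - (1 - x + x^2/2 - x^3/6 + x^4/24)
           = s^4/384 * (32 + 16 * s - 16 * s^2 - 8 * s^3 - s^4)"
    unfolding x_def by (simp add: field_simps power2_eq_square power3_eq_cube power4_eq_xxxx)
  have "s^2 \<le> 1" "s^3 \<le> 1" "s^4 \<le> 1" using assms by (auto simp: power_le_one)
  hence "0 \<le> s^4/384 * (32 + 16 * s - 16 * s^2 - 8 * s^3 - s^4)"
    using assms by (intro mult_nonneg_nonneg) auto
  moreover have "exp (-s - s^2/2) = exp (-x)" unfolding x_def by simp
  moreover have "0 \<le> x" unfolding x_def using assms by simp
  ultimately show ?thesis using gap exp_neg_le_quartic[of x] by linarith
qed

(* For |y| > 1 the profile is \<plusminus>2/3, and exp (y - y^2/2) is at most exp (1/2) resp. exp (-3/2). *)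
lemma exp_quadratic_le_trunc_avg: "exp (y - y^2/2) \<le> 1 + trunc_avg y"
proof -
  consider "0 \<le> y" "y \<le> 1" | "1 < y" | "-1 \<le> y" "y < 0" | "y < -1" by linarith
  thus ?thesis
  proof cases
    case 1
    thus ?thesis using exp_quadratic_le_unit_pos[of y] by (auto simp: trunc_avg_def sgn_if)
  next
    case 2
    have "y - y^2/2 \<le> 1/2"
      using zero_le_power2[of "y - 1"] by (simp add: power2_eq_square algebra_simps)
    hence "exp (y - y^2/2) \<le> exp (1/2)" by simp
    also have "\<dots> \<le> 1 + 1/2 + (1/2)^2/2 + (1/2)^3/6 + (1/2)^4/12"
      by (rule exp_le_quartic) auto
    finally show ?thesis using 2 by (auto simp: trunc_avg_def sgn_if power_divide)
  next
    case 3
    thus ?thesis using exp_quadratic_le_unit_neg[of "-y"] by (auto simp: trunc_avg_def sgn_if)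
  next
    case 4
    have "1 \<le> y * y" using 4 mult_mono[of 1 "-y" 1 "-y"] by simp
    hence "exp (y - y^2/2) \<le> exp (-3/2)" using 4 by (simp add: power2_eq_square)
    also have "exp (-3/2) \<le> (1::real)/3"
    proof -
      have "1 + 3/2 + (3/2)^2/2 \<le> exp (3/2::real)" by (rule exp_lower_Taylor_quadratic) auto
      thus ?thesis by (simp add: exp_minus field_simps power_divide)
    qed
    finally show ?thesis using 4 by (auto simp: trunc_avg_def sgn_if)
  qed
qed

section \<open>The profile as an average of truncations\<close>

lemma trunc_bounded: "0 \<le> a \<Longrightarrow> \<bar>trunc a y\<bar> \<le> a"
  by (auto simp: trunc_def abs_mult sgn_if)

lemma trunc_scale: assumes "t > 0" shows "trunc a (t * x) = t * trunc (a / t) x"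
proof -
  have "min (t * \<bar>x\<bar>) a = t * min \<bar>x\<bar> (a / t)" using assms
    by (simp add: min_def field_simps)
  thus ?thesis using assms by (simp add: trunc_def abs_mult sgn_mult)
qed

lemma integral_power_interval:
  assumes "0 \<le> w" shows "(\<integral>a. a^k * indicator {0..w} a \<partial>lborel) = w^Suc k / Suc k"
  using integral_power[of 0 w k] assms by simp

lemma integrable_power_interval: "integrable lborel (\<lambda>a::real. a^k * indicator {0..w} a)"
  by (rule borel_integrable_atLeastAtMost) auto

lemma integral_weighted_min:
  fixes w :: real
  assumes w: "0 \<le> w"
  shows "(\<integral>a. indicator {0..1} a * (2 * a * min w a) \<partial>lborel)
       = (if w \<le> 1 then w - w^3/3 else 2/3)"
proof (cases "w \<le> 1")
  case True
  define p where "p = (\<lambda>k w' a. a ^ k * indicator {0..w'} a :: real)"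
  have eq: "(\<lambda>a. indicator {0..1} a * (2 * a * min w a))
          = (\<lambda>a. 2 * p 2 w a + 2 * w * p 1 1 a - 2 * w * p 1 w a)"
    using True w by (auto simp: fun_eq_iff indicator_def min_def power2_eq_square p_def)
  have int: "integrable lborel (p k w')" for k w' unfolding p_def by (rule integrable_power_interval)
  have val: "(\<integral>a. p k w' a \<partial>lborel) = w'^Suc k / Suc k" if "0 \<le> w'" for k w'
    unfolding p_def using integral_power_interval[OF that] .
  show ?thesis unfolding eq using True w int
    by (simp add: val del: power_one_right)
       (simp add: field_simps power2_eq_square power3_eq_cube)
next
  case False
  have "(\<lambda>a. indicator {0..1} a * (2 * a * min w a)) = (\<lambda>a. 2 * (a^2 * indicator {0..1} a))"
    using False by (auto simp: fun_eq_iff indicator_def min_def power2_eq_square)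
  thus ?thesis using False by (simp add: integral_power_interval)
qed

lemma trunc_avg_integral:
  "(\<integral>a. indicator {0..1} a * (2 * a * trunc a y) \<partial>lborel) = trunc_avg y"
proof -
  have "(\<lambda>a. indicator {0..1} a * (2 * a * trunc a y))
      = (\<lambda>a. sgn y * (indicator {0..1} a * (2 * a * min \<bar>y\<bar> a)))"
    by (auto simp: trunc_def fun_eq_iff)
  thus ?thesis using integral_weighted_min[of "\<bar>y\<bar>"] by (simp add: trunc_avg_def)
qed

(* Integrating the pointwise inequality: E[h(Y)] \<le> 0 forces E[exp (Y - Y^2/2)] \<le> 1.
   Both integrands are bounded, so integrability is automatic. *)
lemma expectation_exp_quadratic_le_one:
  fixes Y :: "'a \<Rightarrow> real"
  assumes "prob_space M" and [measurable]: "Y \<in> borel_measurable M"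
    and avg: "(\<integral>\<omega>. trunc_avg (Y \<omega>) \<partial>M) \<le> 0"
  shows "(\<integral>\<omega>. exp (Y \<omega> - (Y \<omega>)\<^sup>2 / 2) \<partial>M) \<le> 1"
proof -
  interpret prob_space M by fact
  have pointwise: "exp (Y \<omega> - (Y \<omega>)\<^sup>2 / 2) \<le> 1 + trunc_avg (Y \<omega>)" for \<omega>
    by (rule exp_quadratic_le_trunc_avg)
  have int_avg: "integrable M (\<lambda>\<omega>. trunc_avg (Y \<omega>))"
    by (rule integrable_const_bound[where B=1]) (auto simp: trunc_avg_bounded)
  have "exp (Y \<omega> - (Y \<omega>)\<^sup>2 / 2) \<le> 2" for \<omega>
    using pointwise[of \<omega>] trunc_avg_bounded[of "Y \<omega>"] by linarith
  hence int_exp: "integrable M (\<lambda>\<omega>. exp (Y \<omega> - (Y \<omega>)\<^sup>2 / 2))"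
    by (intro integrable_const_bound[where B=2]) auto
  have "(\<integral>\<omega>. exp (Y \<omega> - (Y \<omega>)\<^sup>2 / 2) \<partial>M) \<le> (\<integral>\<omega>. 1 + trunc_avg (Y \<omega>) \<partial>M)"
    using int_exp int_avg pointwise by (intro integral_mono) auto
  also have "\<dots> = 1 + (\<integral>\<omega>. trunc_avg (Y \<omega>) \<partial>M)"
    using int_avg by (simp add: prob_space)
  finally show ?thesis using avg by simp
qed

(* Fubini: E[h(Y)] = \<integral>_0^1 2a E[T_a(Y)] da.  The integrand is bounded by 2 on [0,1],
   hence integrable on the product of M with Lebesgue measure. *)
lemma expectation_trunc_avg:
  fixes Y :: "'a \<Rightarrow> real"
  assumes "prob_space M" and [measurable]: "Y \<in> borel_measurable M"
  shows "(\<integral>\<omega>. trunc_avg (Y \<omega>) \<partial>M)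
       = (\<integral>a. indicator {0..1} a * (2 * a * (\<integral>\<omega>. trunc a (Y \<omega>) \<partial>M)) \<partial>lborel)"
proof -
  interpret prob_space M by fact
  interpret pair_sigma_finite M lborel
    unfolding pair_sigma_finite_def
    using sigma_finite_measure_axioms lborel.sigma_finite_measure_axioms by blast
  define f where "f = (\<lambda>\<omega> a. indicator {0..1} a * (2 * a * trunc a (Y \<omega>)) :: real)"
  have f_meas[measurable]: "case_prod f \<in> borel_measurable (M \<Otimes>\<^sub>M lborel)"
    unfolding f_def trunc_def by measurable
  have f_bound: "\<bar>f \<omega> a\<bar> \<le> 2 * (a^0 * indicator {0..1} a)" for \<omega> a
  proof (cases "a \<in> {0..1}")
    case True
    have "\<bar>trunc a (Y \<omega>)\<bar> \<le> 1" using trunc_bounded[of a "Y \<omega>"] True by auto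
    hence "a * \<bar>trunc a (Y \<omega>)\<bar> \<le> 1" using True by (intro mult_le_one) auto
    thus ?thesis using True by (simp add: f_def abs_mult)
  qed (simp add: f_def)
  have int_bound: "integrable lborel (\<lambda>a. 2 * (a^0 * indicator {0..1} a :: real))"
    by (intro integrable_mult_right integrable_power_interval)
  have int_slice: "integrable lborel (f \<omega>)" for \<omega>
    by (rule Bochner_Integration.integrable_bound[OF int_bound])
       (use f_bound in \<open>auto simp: f_def trunc_def\<close>)
  have "(\<integral>a. norm (f \<omega> a) \<partial>lborel) \<le> (\<integral>a. 2 * (a^0 * indicator {0..1} a) \<partial>lborel)" for \<omega>
    using int_slice int_bound f_bound by (intro integral_mono) auto
  hence slice_bound: "norm (\<integral>a. norm (f \<omega> a) \<partial>lborel) \<le> 2" for \<omega>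
    using integral_power_interval[of 1 0] by simp
  have "integrable (M \<Otimes>\<^sub>M lborel) (case_prod f)"
    by (rule Fubini_integrable)
       (use slice_bound int_slice in \<open>auto intro!: integrable_const_bound[where B=2]\<close>)
  hence "(\<integral>\<omega>. (\<integral>a. f \<omega> a \<partial>lborel) \<partial>M) = (\<integral>a. (\<integral>\<omega>. f \<omega> a \<partial>M) \<partial>lborel)"
    by (rule Fubini_integral[symmetric])
  thus ?thesis by (simp add: f_def trunc_avg_integral)
qed

lemma heavy_on_left_trunc_scaled:
  assumes "heavy_on_left M X" "0 \<le> t" "0 \<le> a"
  shows "(\<integral>\<omega>. trunc a (t * X \<omega>) \<partial>M) \<le> 0"
proof (cases "t > 0 \<and> a > 0")
  case True
  hence "(\<integral>\<omega>. trunc (a/t) (X \<omega>) \<partial>M) \<le> 0"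
    using assms(1) unfolding heavy_on_left_def by simp
  thus ?thesis using True by (simp add: trunc_scale mult_nonneg_nonpos)
next
  case False
  hence "trunc a (t * X \<omega>) = 0" for \<omega> using assms by (auto simp: trunc_def)
  thus ?thesis by simp
qed

lemma heavy_on_left_trunc_avg:
  assumes "prob_space M" "X \<in> borel_measurable M" "heavy_on_left M X" "0 \<le> t"
  shows "(\<integral>\<omega>. trunc_avg (t * X \<omega>) \<partial>M) \<le> 0"
proof -
  have "indicator {0..1} a * (2 * a * (\<integral>\<omega>. trunc a (t * X \<omega>) \<partial>M)) \<le> 0" for a :: real
    using heavy_on_left_trunc_scaled[OF assms(3,4), of a]
    by (cases "a \<in> {0..1}") (auto intro: mult_nonneg_nonpos)
  hence "0 \<le> (\<integral>a. - (indicator {0..1} a * (2 * a * (\<integral>\<omega>. trunc a (t * X \<omega>) \<partial>M))) \<partial>lborel)"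
    by (intro Bochner_Integration.integral_nonneg) auto
  thus ?thesis using expectation_trunc_avg[OF assms(1)] assms(2) by simp
qed

(* Odd functions of a symmetric random variable have zero mean (no integrability needed,
   as the Bochner integral of a non-integrable function is 0 as well). *)
lemma symmetric_odd_integral_zero:
  fixes g :: "real \<Rightarrow> real"
  assumes [measurable]: "X \<in> borel_measurable M" "g \<in> borel_measurable borel"
    and sym: "symmetric_rv M X" and odd: "\<And>x. g (-x) = - g x"
  shows "(\<integral>\<omega>. g (X \<omega>) \<partial>M) = 0"
proof -
  have "(\<integral>\<omega>. g (X \<omega>) \<partial>M) = (\<integral>x. g x \<partial>distr M borel X)"
    by (simp add: integral_distr)
  also have "\<dots> = (\<integral>x. g x \<partial>distr M borel (\<lambda>\<omega>. - X \<omega>))"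
    using sym unfolding symmetric_rv_def by simp
  also have "\<dots> = - (\<integral>\<omega>. g (X \<omega>) \<partial>M)"
    by (simp add: integral_distr odd)
  finally show ?thesis by simp
qed

theorem lemma3p1:
  fixes M :: "'a measure" and X :: "'a \<Rightarrow> real"
  assumes "prob_space M"
    and "X \<in> borel_measurable M"
  defines "L \<equiv> (\<lambda>t. \<integral>\<omega>. exp (t * X \<omega> - t\<^sup>2 / 2 * (X \<omega>)\<^sup>2) \<partial>M)"
  shows "(heavy_on_left M X \<longrightarrow> (\<forall>t\<ge>0. L t \<le> 1))
       \<and> (heavy_on_right M X \<longrightarrow> (\<forall>t\<le>0. L t \<le> 1))
       \<and> (symmetric_rv M X \<longrightarrow> (\<forall>t. L t \<le> 1))"
proof -
  have L_le_one: "L t \<le> 1" if "(\<integral>\<omega>. trunc_avg (t * X \<omega>) \<partial>M) \<le> 0" for t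
    using expectation_exp_quadratic_le_one[OF assms(1), of "\<lambda>\<omega>. t * X \<omega>"] that assms(2)
    by (simp add: L_def power_mult_distrib)
  have neg_meas: "(\<lambda>\<omega>. - X \<omega>) \<in> borel_measurable M" using assms(2) by measurable
  have "L t \<le> 1" if "heavy_on_left M X" "t \<ge> 0" for t
    using L_le_one heavy_on_left_trunc_avg[OF assms(1,2)] that by blast
  moreover have "L t \<le> 1" if "heavy_on_right M X" "t \<le> 0" for t
    using heavy_on_left_trunc_avg[OF assms(1) neg_meas, of "-t"] that
    by (intro L_le_one) (simp add: heavy_on_right_def)
  moreover have "L t \<le> 1" if "symmetric_rv M X" for t
    using symmetric_odd_integral_zero[OF assms(2) _ that, of "\<lambda>x. trunc_avg (t * x)"]
    by (intro L_le_one) (simp add: trunc_avg_odd)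
  ultimately show ?thesis by blast
qed

end
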